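(* Let $\mathbb{F}_q$ have characteristic $p$, let $n,v\ge1$, $\mathcal{R}=\mathbb{F}_q[x_1,\dots,x_v]/\langle x_1^{i_1}\cdots x_v^{i_v}\mid i_1+\dots+i_v=n\rangle$, and let $l\in\{1,\dots,v\}$. Then \[ \mathbb{E}_{\chi\in\widehat{\mathcal{R}_\times}}\left[\left|\sum_{a\in\mathbb{F}_q^*}\chi(x_l-a)\right|\right]\le\frac{q-1}{\sqrt{p-1}}, \] where the expectation is over $\chi$ chosen uniformly from all characters of the unit group $\mathcal{R}_\times$.
   Context: For $a\in\mathbb{F}_q^*$, $x_l-a$ is a unit of $\mathcal{R}$. $\widehat{\mathcal{R}_\times}$ denotes the group of homomorphisms from $\mathcal{R}_\times$ to the complex unit circle. *)

theory Defs
  imports Complex_Main "HOL-Algebra.Ring" "HOL-Library.Cardinality"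
begin

text \<open>Exponent vectors (x_1..x_v indexed by 0..v-1) of monomials that survive in
  F_q[x_1..x_v] / < all monomials of total degree n >, i.e. total degree < n.\<close>
definition trunc_monos :: "nat \<Rightarrow> nat \<Rightarrow> (nat \<Rightarrow> nat) set" where
  "trunc_monos v n = {e. (\<forall>i\<ge>v. e i = 0) \<and> (\<Sum>i<v. e i) < n}"

text \<open>The truncated polynomial ring R: elements are coefficient functions supported
  on the surviving monomials; multiplication is convolution followed by truncation.\<close>
definition trunc_ring :: "nat \<Rightarrow> nat \<Rightarrow> ((nat \<Rightarrow> nat) \<Rightarrow> 'a::field) ring" where
  "trunc_ring v n = \<lparr>
     carrier = {f. \<forall>e. e \<notin> trunc_monos v n \<longrightarrow> f e = 0},
     mult = (\<lambda>f g e. if e \<in> trunc_monos v n then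
                (\<Sum>(e1, e2) \<in> {(e1, e2). e1 \<in> trunc_monos v n \<and> e2 \<in> trunc_monos v n \<and> (\<lambda>i. e1 i + e2 i) = e}.
                    f e1 * g e2)
              else 0),
     one = (\<lambda>e. if e = (\<lambda>_. 0) then 1 else 0),
     zero = (\<lambda>_. 0),
     add = (\<lambda>f g e. f e + g e)\<rparr>"

text \<open>The element x_l - a of R (variable index l, 0-based), i.e. the image of the
  polynomial x_l - a under the quotient map.\<close>
definition var_minus_const :: "nat \<Rightarrow> nat \<Rightarrow> nat \<Rightarrow> 'a::field \<Rightarrow> (nat \<Rightarrow> nat) \<Rightarrow> 'a" where
  "var_minus_const v n l a = (\<lambda>e. if e \<in> trunc_monos v n then
       (if e = (\<lambda>i. if i = l then 1 else 0) then 1 else 0) - (if e = (\<lambda>_. 0) then a else 0)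
     else 0)"

definition circle_group :: "complex monoid" where
  "circle_group = \<lparr>carrier = {z. cmod z = 1}, mult = (*), one = 1\<rparr>"

text \<open>Characters of the unit group R_x: homomorphisms from R_x to the unit circle
  (taken extensional, i.e. undefined outside R_x, so the set is the dual group).\<close>
definition unit_characters :: "nat \<Rightarrow> nat \<Rightarrow> (((nat \<Rightarrow> nat) \<Rightarrow> 'a::field) \<Rightarrow> complex) set" where
  "unit_characters v n =
     {\<chi>. \<chi> \<in> hom (units_of (trunc_ring v n)) circle_group \<and>
         \<chi> \<in> extensional (Units (trunc_ring v n))}"

end

(* Let S(chi) be the sum of chi(x_l - a) over a in F_q^*. If phi is a faithful character of the
   cyclic group F_q^*, then u |-> phi(u(0)) is a character of R^x that takes different values at
   x_l - a and x_l - b for a /= b; twisting by it shows that these elements are orthogonal for the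
   sum over all characters chi of R^x. So the mean of |S(chi)|^2 is exactly q - 1, and
   Cauchy-Schwarz bounds the mean of |S(chi)| by sqrt (q - 1) <= (q - 1) / sqrt (p - 1). *)

theory Submission
  imports Defs "HOL-Algebra.Multiplicative_Group" "HOL-Algebra.Algebraic_Closure_Type"
    "HOL-Number_Theory.Residues" "HOL-Analysis.Complex_Transcendental"
begin

(* frees the name chi, otherwise the vector binder of HOL-Analysis *)
unbundle no vec_syntax

section \<open>Characters of a monoid\<close>

definition characters :: "('g, 'b) monoid_scheme \<Rightarrow> ('g \<Rightarrow> complex) set" where
  "characters G = {\<chi>. \<chi> \<in> hom G circle_group \<and> \<chi> \<in> extensional (carrier G)}"

lemma charactersI:
  assumes "\<And>x. x \<in> carrier G \<Longrightarrow> cmod (\<chi> x) = 1"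
    and "\<And>x y. x \<in> carrier G \<Longrightarrow> y \<in> carrier G \<Longrightarrow> \<chi> (x \<otimes>\<^bsub>G\<^esub> y) = \<chi> x * \<chi> y"
    and "\<chi> \<in> extensional (carrier G)"
  shows "\<chi> \<in> characters G"
  using assms by (auto simp: characters_def hom_def circle_group_def)

lemma character_norm: "\<chi> \<in> characters G \<Longrightarrow> x \<in> carrier G \<Longrightarrow> cmod (\<chi> x) = 1"
  by (auto simp: characters_def hom_def circle_group_def)

lemma character_mult:
  "\<chi> \<in> characters G \<Longrightarrow> x \<in> carrier G \<Longrightarrow> y \<in> carrier G \<Longrightarrow> \<chi> (x \<otimes>\<^bsub>G\<^esub> y) = \<chi> x * \<chi> y"
  by (auto simp: characters_def hom_def circle_group_def)

lemma character_mult_cnj_self: "\<chi> \<in> characters G \<Longrightarrow> x \<in> carrier G \<Longrightarrow> \<chi> x * cnj (\<chi> x) = 1"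
  by (metis character_norm complex_norm_square of_real_1 power_one)

lemma restrict_mult_characters:
  assumes "monoid G" "\<chi> \<in> characters G" "\<psi> \<in> characters G"
  shows "(\<lambda>x\<in>carrier G. \<chi> x * \<psi> x) \<in> characters G"
  using assms by (intro charactersI) (auto simp: character_norm character_mult norm_mult monoid.m_closed)

lemma restrict_cnj_character:
  assumes "monoid G" "\<chi> \<in> characters G"
  shows "(\<lambda>x\<in>carrier G. cnj (\<chi> x)) \<in> characters G"
  using assms by (intro charactersI) (auto simp: character_norm character_mult monoid.m_closed)

lemma bij_betw_twist_characters:
  assumes "monoid G" "\<psi> \<in> characters G"
  shows "bij_betw (\<lambda>\<chi>. \<lambda>x\<in>carrier G. \<psi> x * \<chi> x) (characters G) (characters G)"
proof (rule bij_betw_byWitness[where f' = "\<lambda>\<chi>. \<lambda>x\<in>carrier G. cnj (\<psi> x) * \<chi> x"])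
  have cancel: "cnj (\<psi> x) * (\<psi> x * z) = z" "\<psi> x * (cnj (\<psi> x) * z) = z" if "x \<in> carrier G" for x z
    using character_mult_cnj_self[OF assms(2) that]
    by (simp_all add: mult.assoc[symmetric] mult.commute[of "cnj (\<psi> x)"])
  show "\<forall>\<chi>\<in>characters G. (\<lambda>x\<in>carrier G. cnj (\<psi> x) * (\<lambda>x\<in>carrier G. \<psi> x * \<chi> x) x) = \<chi>"
    "\<forall>\<chi>\<in>characters G. (\<lambda>x\<in>carrier G. \<psi> x * (\<lambda>x\<in>carrier G. cnj (\<psi> x) * \<chi> x) x) = \<chi>"
    by (auto simp: cancel fun_eq_iff characters_def extensional_def)
  show "(\<lambda>\<chi>. \<lambda>x\<in>carrier G. \<psi> x * \<chi> x) ` characters G \<subseteq> characters G"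
    using assms by (auto intro: restrict_mult_characters)
  show "(\<lambda>\<chi>. \<lambda>x\<in>carrier G. cnj (\<psi> x) * \<chi> x) ` characters G \<subseteq> characters G"
    using restrict_mult_characters[OF assms(1) restrict_cnj_character[OF assms]]
    by (auto cong: restrict_cong)
qed

lemma sum_characters_orthogonal:
  assumes "monoid G" "\<psi> \<in> characters G" "x \<in> carrier G" "y \<in> carrier G" "\<psi> x \<noteq> \<psi> y"
  shows "(\<Sum>\<chi>\<in>characters G. \<chi> x * cnj (\<chi> y)) = 0"
proof -
  define S where "S = (\<Sum>\<chi>\<in>characters G. \<chi> x * cnj (\<chi> y))"
  have "S = (\<Sum>\<chi>\<in>characters G. (\<psi> x * \<chi> x) * cnj (\<psi> y * \<chi> y))"
    unfolding S_def using assms(3,4)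
    by (subst sum.reindex_bij_betw[OF bij_betw_twist_characters[OF assms(1,2)], symmetric]) simp
  also have "\<dots> = \<psi> x * cnj (\<psi> y) * S"
    by (simp add: S_def sum_distrib_left mult_ac)
  finally have "(\<psi> x * cnj (\<psi> y) - 1) * S = 0"
    by (simp add: algebra_simps)
  moreover have "\<psi> x * cnj (\<psi> y) \<noteq> 1"
  proof
    assume "\<psi> x * cnj (\<psi> y) = 1"
    then have "\<psi> x * (cnj (\<psi> y) * \<psi> y) = \<psi> y"
      by (metis mult.assoc mult_1)
    then show False
      using assms(5) character_mult_cnj_self[OF assms(2,4)] by (simp add: mult.commute)
  qed
  ultimately have "S = 0"
    by simp
  then show ?thesis
    by (simp only: S_def)
qed

lemma sum_norm_square_character_sums:
  assumes "monoid G" "finite A" "u ` A \<subseteq> carrier G"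
    and separating: "\<And>a b. a \<in> A \<Longrightarrow> b \<in> A \<Longrightarrow> a \<noteq> b \<Longrightarrow> \<exists>\<psi>\<in>characters G. \<psi> (u a) \<noteq> \<psi> (u b)"
  shows "(\<Sum>\<chi>\<in>characters G. (cmod (\<Sum>a\<in>A. \<chi> (u a)))\<^sup>2) = real (card (characters G) * card A)"
proof -
  have inner: "(\<Sum>\<chi>\<in>characters G. \<chi> (u a) * cnj (\<chi> (u b))) = (if a = b then of_nat (card (characters G)) else 0)"
    if ab: "a \<in> A" "b \<in> A" for a b
  proof (cases "a = b")
    case True
    then show ?thesis
      using assms(3) ab by (simp add: character_mult_cnj_self image_subset_iff)
  next
    case False
    then obtain \<psi> where "\<psi> \<in> characters G" "\<psi> (u a) \<noteq> \<psi> (u b)"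
      using separating ab by blast
    then show ?thesis
      using False sum_characters_orthogonal[OF assms(1)] assms(3) ab by (simp add: image_subset_iff)
  qed
  have norm_square: "complex_of_real ((cmod (\<Sum>a\<in>A. \<chi> (u a)))\<^sup>2)
      = (\<Sum>a\<in>A. \<Sum>b\<in>A. \<chi> (u a) * cnj (\<chi> (u b)))" for \<chi>
    unfolding complex_norm_square by (simp add: sum_product)
  have "complex_of_real (\<Sum>\<chi>\<in>characters G. (cmod (\<Sum>a\<in>A. \<chi> (u a)))\<^sup>2)
      = (\<Sum>\<chi>\<in>characters G. \<Sum>a\<in>A. \<Sum>b\<in>A. \<chi> (u a) * cnj (\<chi> (u b)))"
    by (simp only: of_real_sum norm_square)
  also have "\<dots> = (\<Sum>a\<in>A. \<Sum>\<chi>\<in>characters G. \<Sum>b\<in>A. \<chi> (u a) * cnj (\<chi> (u b)))"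
    by (rule sum.swap)
  also have "\<dots> = (\<Sum>a\<in>A. \<Sum>b\<in>A. \<Sum>\<chi>\<in>characters G. \<chi> (u a) * cnj (\<chi> (u b)))"
    by (rule sum.cong[OF refl]) (rule sum.swap)
  also have "\<dots> = complex_of_real (real (card (characters G) * card A))"
    using assms(2) by (simp add: inner)
  finally show ?thesis
    by (simp only: of_real_eq_iff)
qed

lemma mean_norm_character_sum_le:
  assumes "monoid G" "finite A" "u ` A \<subseteq> carrier G"
    and separating: "\<And>a b. a \<in> A \<Longrightarrow> b \<in> A \<Longrightarrow> a \<noteq> b \<Longrightarrow> \<exists>\<psi>\<in>characters G. \<psi> (u a) \<noteq> \<psi> (u b)"
  shows "(\<Sum>\<chi>\<in>characters G. cmod (\<Sum>a\<in>A. \<chi> (u a))) / card (characters G) \<le> sqrt (card A)"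
  \<comment> \<open>no finiteness hypothesis: infinitely many characters give \<open>card = 0\<close> and a quotient \<open>0\<close>\<close>
proof (cases "card (characters G) = 0")
  case False
  define N where "N = real (card (characters G))"
  have "(\<Sum>\<chi>\<in>characters G. cmod (\<Sum>a\<in>A. \<chi> (u a)))\<^sup>2
      \<le> (\<Sum>\<chi>\<in>characters G. (cmod (\<Sum>a\<in>A. \<chi> (u a)))\<^sup>2) * N"
    unfolding N_def by (rule sum_squared_le_sum_of_squares)
  also have "\<dots> = (N * sqrt (card A))\<^sup>2"
  proof -
    note sum_norm_square_character_sums[OF assms]
    then show ?thesis by (simp add: N_def power_mult_distrib power2_eq_square)
  qed
  finally have "(\<Sum>\<chi>\<in>characters G. cmod (\<Sum>a\<in>A. \<chi> (u a))) \<le> N * sqrt (card A)"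
    by (rule power2_le_imp_le) (simp add: N_def)
  then show ?thesis
    using False by (simp add: N_def divide_le_eq mult.commute)
qed simp

section \<open>Faithful characters of finite cyclic groups\<close>

lemma (in group) cyclic_group_faithful_character:
  assumes finite: "finite (carrier G)"
    and gen: "g \<in> carrier G" "carrier G = {g [^] i | i::nat. i \<in> UNIV}"
  obtains \<phi> where "\<phi> \<in> hom G circle_group" "inj_on \<phi> (carrier G)"
proof -
  define m where "m = ord g"
  have m: "1 \<le> m"
    unfolding m_def using ord_ge_1[OF finite gen(1)] .
  define \<zeta> where "\<zeta> k = exp (2 * of_real pi * \<i> * of_nat k / of_nat m)" for k :: nat
  have pow_eq_iff: "g [^] i = g [^] j \<longleftrightarrow> i mod m = j mod m" for i j :: nat
    using int_pow_eq[OF gen(1), of "int i" "int j"]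
    by (simp add: int_pow_int m_def) (metis mod_eq_dvd_iff of_nat_eq_iff zmod_int)
  have \<zeta>_eq_iff: "\<zeta> i = \<zeta> j \<longleftrightarrow> i mod m = j mod m" for i j
    unfolding \<zeta>_def by (rule complex_root_unity_eq[OF m])
  have \<zeta>_add: "\<zeta> (i + j) = \<zeta> i * \<zeta> j" for i j
    by (simp add: \<zeta>_def add_divide_distrib distrib_left exp_add)
  have \<zeta>_norm: "cmod (\<zeta> i) = 1" for i
    by (simp add: \<zeta>_def norm_exp_eq_Re)
  define \<phi> where "\<phi> x = \<zeta> (SOME i. x = g [^] i)" for x
  have \<phi>_pow: "\<phi> (g [^] i) = \<zeta> i" for i
  proof -
    have "g [^] i = g [^] (SOME k::nat. g [^] i = g [^] k)"
      by (rule someI[of _ i]) (rule refl)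
    then show ?thesis
      unfolding \<phi>_def by (simp add: pow_eq_iff \<zeta>_eq_iff)
  qed
  show thesis
  proof
    show "\<phi> \<in> hom G circle_group"
    proof (rule homI)
      show "\<phi> x \<in> carrier circle_group" for x
        by (simp add: \<phi>_def circle_group_def \<zeta>_norm)
      show "\<phi> (x \<otimes> y) = \<phi> x \<otimes>\<^bsub>circle_group\<^esub> \<phi> y" if "x \<in> carrier G" "y \<in> carrier G" for x y
        using that unfolding gen(2)
        by (auto simp: nat_pow_mult[OF gen(1)] \<phi>_pow \<zeta>_add circle_group_def)
    qed
    show "inj_on \<phi> (carrier G)"
      unfolding gen(2) by (auto intro!: inj_onI simp: \<phi>_pow \<zeta>_eq_iff pow_eq_iff)
  qed
qed

lemma finite_field_faithful_character:
  obtains \<phi> :: "'a::{finite,field} \<Rightarrow> complex"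
  where "\<And>x. x \<noteq> 0 \<Longrightarrow> cmod (\<phi> x) = 1"
    and "\<And>x y. x \<noteq> 0 \<Longrightarrow> y \<noteq> 0 \<Longrightarrow> \<phi> (x * y) = \<phi> x * \<phi> y"
    and "inj_on \<phi> (- {0})"
proof -
  let ?K = "ring_of_type_algebra :: 'a ring"
  interpret K: field ?K
    by (rule field_from_type_algebra)
  interpret G: group "units_of ?K"
    by (rule K.units_group)
  have units: "Units ?K = - {0}"
    using K.field_Units by (auto simp: ring_of_type_algebra_def)
  have "finite (carrier ?K)"
    by (simp add: ring_of_type_algebra_def)
  then obtain g where "g \<in> carrier (units_of ?K)" "carrier (units_of ?K) = {g [^]\<^bsub>?K\<^esub> i | i::nat. i \<in> UNIV}"
    using K.finite_field_mult_group_has_gen unfolding K.mult_of_is_Units by blast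
  then have g: "g \<in> Units ?K" "Units ?K = {g [^]\<^bsub>?K\<^esub> i | i::nat. i \<in> UNIV}"
    by (simp_all add: units_of_carrier)
  moreover have "g [^]\<^bsub>units_of ?K\<^esub> i = g [^]\<^bsub>?K\<^esub> i" for i :: nat
    using K.units_of_pow[OF g(1)] .
  ultimately obtain \<phi> where "\<phi> \<in> hom (units_of ?K) circle_group" "inj_on \<phi> (Units ?K)"
    using G.cyclic_group_faithful_character[of g] by (auto simp: units_of_carrier)
  then show thesis
    using units
    by (intro that[of \<phi>]) (auto simp: hom_def circle_group_def units_of_carrier units_of_mult ring_of_type_algebra_def)
qed

section \<open>The truncated polynomial ring\<close>

definition monomial_splits :: "nat \<Rightarrow> nat \<Rightarrow> (nat \<Rightarrow> nat) \<Rightarrow> ((nat \<Rightarrow> nat) \<times> (nat \<Rightarrow> nat)) set" where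
  "monomial_splits v n e =
     {(e1, e2). e1 \<in> trunc_monos v n \<and> e2 \<in> trunc_monos v n \<and> (\<lambda>i. e1 i + e2 i) = e}"

lemma trunc_ring_mult:
  "f \<otimes>\<^bsub>trunc_ring v n\<^esub> g =
     (\<lambda>e. if e \<in> trunc_monos v n then \<Sum>(e1, e2)\<in>monomial_splits v n e. f e1 * (g e2 :: 'a::field) else 0)"
  unfolding trunc_ring_def monomial_splits_def by simp

lemma trunc_ring_one: "\<one>\<^bsub>trunc_ring v n\<^esub> = (\<lambda>e. if e = (\<lambda>_. 0) then 1 else (0 :: 'a::field))"
  by (simp add: trunc_ring_def)

lemma trunc_ring_carrier:
  "f \<in> carrier (trunc_ring v n) \<longleftrightarrow> (\<forall>e. e \<notin> trunc_monos v n \<longrightarrow> (f e :: 'a::field) = 0)"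
  by (simp add: trunc_ring_def)

lemma zero_in_trunc_monos: "0 < n \<Longrightarrow> (\<lambda>_. 0) \<in> trunc_monos v n"
  by (simp add: trunc_monos_def)

lemma trunc_monos_downward_closed:
  assumes "e \<in> trunc_monos v n" "\<And>i. d i \<le> e i"
  shows "d \<in> trunc_monos v n"
proof -
  have "(\<Sum>i<v. d i) \<le> (\<Sum>i<v. e i)"
    using assms(2) by (rule sum_mono)
  moreover have "d i = 0" if "v \<le> i" for i
    using assms(1) assms(2)[of i] that unfolding trunc_monos_def by simp
  ultimately show ?thesis
    using assms(1) unfolding trunc_monos_def by auto
qed

lemma finite_trunc_monos: "finite (trunc_monos v n)"
proof (rule finite_subset)
  show "trunc_monos v n \<subseteq> (\<lambda>f i. if i < v then f i else 0) ` ({..<v} \<rightarrow>\<^sub>E {..<n})"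
  proof
    fix e assume e: "e \<in> trunc_monos v n"
    have "e i < n" if "i < v" for i
      using member_le_sum[of i "{..<v}" e] that e by (simp add: trunc_monos_def)
    then have "restrict e {..<v} \<in> {..<v} \<rightarrow>\<^sub>E {..<n}"
      by auto
    moreover have "e = (\<lambda>i. if i < v then restrict e {..<v} i else 0)"
      using e by (auto simp: trunc_monos_def fun_eq_iff)
    ultimately show "e \<in> (\<lambda>f i. if i < v then f i else 0) ` ({..<v} \<rightarrow>\<^sub>E {..<n})"
      by blast
  qed
qed (intro finite_imageI finite_PiE; simp)

lemma finite_monomial_splits: "finite (monomial_splits v n e)"
  by (rule finite_subset[of _ "trunc_monos v n \<times> trunc_monos v n"])
     (auto simp: monomial_splits_def finite_trunc_monos)

lemma sum_monomial_splits_fst_eq: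
  assumes "e \<in> trunc_monos v n"
  shows "(\<Sum>(e1, e2)\<in>monomial_splits v n e. if e1 = d then h e2 else 0)
       = (if \<forall>i. d i \<le> e i then h (\<lambda>i. e i - d i) else 0)"
proof -
  have filter: "{p \<in> monomial_splits v n e. fst p = d} = (if \<forall>i. d i \<le> e i then {(d, \<lambda>i. e i - d i)} else {})"
  proof (cases "\<forall>i. d i \<le> e i")
    case True
    then have "d \<in> trunc_monos v n" "(\<lambda>i. e i - d i) \<in> trunc_monos v n"
      using assms by (auto intro: trunc_monos_downward_closed)
    with True show ?thesis
      by (auto simp: monomial_splits_def fun_eq_iff) (metis add_diff_cancel_left')
  next
    case False
    then show ?thesis
      by (auto simp: monomial_splits_def fun_eq_iff) (metis le_add1)
  qed
  have "(\<Sum>(e1, e2)\<in>monomial_splits v n e. if e1 = d then h e2 else 0)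
      = (\<Sum>p\<in>{p \<in> monomial_splits v n e. fst p = d}. h (snd p))"
    by (simp add: sum.inter_filter[OF finite_monomial_splits] split_def)
  then show ?thesis
    by (simp add: filter)
qed

lemma sum_monomial_splits_assoc:
  assumes "e \<in> trunc_monos v n"
  shows "(\<Sum>(p, c)\<in>monomial_splits v n e. \<Sum>(a, b)\<in>monomial_splits v n p. F a b c)
       = (\<Sum>(a, q)\<in>monomial_splits v n e. \<Sum>(b, c)\<in>monomial_splits v n q. F a b c)"
proof -
  let ?S = "monomial_splits v n"
  have "(\<Sum>(p, c)\<in>?S e. \<Sum>(a, b)\<in>?S p. F a b c) = (\<Sum>x\<in>?S e. \<Sum>y\<in>?S (fst x). F (fst y) (snd y) (snd x))"
    by (simp add: split_def)
  also have "\<dots> = (\<Sum>(x, y)\<in>Sigma (?S e) (\<lambda>x. ?S (fst x)). F (fst y) (snd y) (snd x))"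
    by (rule sum.Sigma) (simp_all add: finite_monomial_splits)
  also have "\<dots> = (\<Sum>(x, y)\<in>Sigma (?S e) (\<lambda>x. ?S (snd x)). F (fst x) (fst y) (snd y))"
  proof -
    let ?j = "\<lambda>((p, c), (a, b)). ((a, \<lambda>i. b i + c i), (b, c))"
    let ?i = "\<lambda>((a, q), (b, c)). ((\<lambda>i. a i + b i, c), (a, b))"
    have partial_sums: "(\<lambda>i. a i + b i) \<in> trunc_monos v n" "(\<lambda>i. b i + c i) \<in> trunc_monos v n"
      if "(\<lambda>i. a i + (b i + c i)) = e" for a b c :: "nat \<Rightarrow> nat"
      using trunc_monos_downward_closed[OF assms[folded that]] by simp_all
    show ?thesis
    proof (rule sum.reindex_bij_witness[where i = ?i and j = ?j])
      fix x assume "x \<in> Sigma (?S e) (\<lambda>x. ?S (fst x))"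
      then obtain a b c where "x = ((\<lambda>i. a i + b i, c), (a, b))" "(\<lambda>i. a i + (b i + c i)) = e"
        "a \<in> trunc_monos v n" "b \<in> trunc_monos v n" "c \<in> trunc_monos v n"
        by (auto simp: monomial_splits_def add.assoc)
      then show "?i (?j x) = x" "?j x \<in> Sigma (?S e) (\<lambda>x. ?S (snd x))"
        "(\<lambda>(x, y). F (fst x) (fst y) (snd y)) (?j x) = (\<lambda>(x, y). F (fst y) (snd y) (snd x)) x"
        using partial_sums by (auto simp: monomial_splits_def)
    next
      fix y assume "y \<in> Sigma (?S e) (\<lambda>x. ?S (snd x))"
      then obtain a b c where "y = ((a, \<lambda>i. b i + c i), (b, c))" "(\<lambda>i. a i + (b i + c i)) = e"
        "a \<in> trunc_monos v n" "b \<in> trunc_monos v n" "c \<in> trunc_monos v n"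
        by (auto simp: monomial_splits_def)
      then show "?j (?i y) = y" "?i y \<in> Sigma (?S e) (\<lambda>x. ?S (fst x))"
        using partial_sums by (auto simp: monomial_splits_def add.assoc)
    qed
  qed
  also have "\<dots> = (\<Sum>x\<in>?S e. \<Sum>y\<in>?S (snd x). F (fst x) (fst y) (snd y))"
    by (rule sum.Sigma[symmetric]) (simp_all add: finite_monomial_splits)
  also have "\<dots> = (\<Sum>(a, q)\<in>?S e. \<Sum>(b, c)\<in>?S q. F a b c)"
    by (simp add: split_def)
  finally show ?thesis .
qed

lemma trunc_ring_mult_comm: "f \<otimes>\<^bsub>trunc_ring v n\<^esub> g = g \<otimes>\<^bsub>trunc_ring v n\<^esub> (f :: _ \<Rightarrow> 'a::field)"
proof -
  have swap: "(\<Sum>(e1, e2)\<in>monomial_splits v n e. f e1 * g e2) = (\<Sum>(e1, e2)\<in>monomial_splits v n e. g e1 * f e2)" for e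
    by (rule sum.reindex_bij_witness[of _ prod.swap prod.swap])
       (auto simp: monomial_splits_def add.commute mult.commute)
  show ?thesis
    unfolding trunc_ring_mult swap ..
qed

lemma trunc_ring_mult_assoc:
  "(f \<otimes>\<^bsub>trunc_ring v n\<^esub> g) \<otimes>\<^bsub>trunc_ring v n\<^esub> h
     = f \<otimes>\<^bsub>trunc_ring v n\<^esub> (g \<otimes>\<^bsub>trunc_ring v n\<^esub> (h :: _ \<Rightarrow> 'a::field))"
proof -
  have in_trunc: "fst p \<in> trunc_monos v n" "snd p \<in> trunc_monos v n" if "p \<in> monomial_splits v n e" for p e
    using that by (auto simp: monomial_splits_def)
  have "(\<Sum>(p, c)\<in>monomial_splits v n e. (\<Sum>(a, b)\<in>monomial_splits v n p. f a * g b) * h c)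
      = (\<Sum>(a, q)\<in>monomial_splits v n e. f a * (\<Sum>(b, c)\<in>monomial_splits v n q. g b * h c))"
    if "e \<in> trunc_monos v n" for e
    using sum_monomial_splits_assoc[OF that, of "\<lambda>a b c. f a * g b * h c"]
    by (simp add: sum_distrib_left sum_distrib_right split_def mult.assoc)
  then show ?thesis
    by (auto simp: trunc_ring_mult fun_eq_iff split_def in_trunc cong: sum.cong)
qed

lemma trunc_ring_one_mult:
  assumes "0 < n" "f \<in> carrier (trunc_ring v n)"
  shows "\<one>\<^bsub>trunc_ring v n\<^esub> \<otimes>\<^bsub>trunc_ring v n\<^esub> f = (f :: _ \<Rightarrow> 'a::field)"
proof
  fix e
  show "(\<one>\<^bsub>trunc_ring v n\<^esub> \<otimes>\<^bsub>trunc_ring v n\<^esub> f) e = f e"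
  proof (cases "e \<in> trunc_monos v n")
    case True
    have "(\<Sum>(e1, e2)\<in>monomial_splits v n e. \<one>\<^bsub>trunc_ring v n\<^esub> e1 * f e2)
        = (\<Sum>(e1, e2)\<in>monomial_splits v n e. if e1 = (\<lambda>_. 0) then f e2 else 0)"
      by (intro sum.cong) (auto simp: trunc_ring_one)
    then show ?thesis
      using True by (simp add: trunc_ring_mult sum_monomial_splits_fst_eq)
  next
    case False
    then show ?thesis
      using assms(2) by (simp add: trunc_ring_mult trunc_ring_carrier)
  qed
qed

lemma comm_monoid_trunc_ring:
  assumes "0 < n"
  shows "comm_monoid (trunc_ring v n :: ((nat \<Rightarrow> nat) \<Rightarrow> 'a::field) ring)"
proof (rule comm_monoidI)
  show "f \<otimes>\<^bsub>trunc_ring v n\<^esub> g \<in> carrier (trunc_ring v n :: ((nat \<Rightarrow> nat) \<Rightarrow> 'a) ring)" for f g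
    by (simp add: trunc_ring_carrier trunc_ring_mult)
  show "\<one>\<^bsub>trunc_ring v n\<^esub> \<in> carrier (trunc_ring v n :: ((nat \<Rightarrow> nat) \<Rightarrow> 'a) ring)"
    using zero_in_trunc_monos[OF assms] by (auto simp: trunc_ring_carrier trunc_ring_one)
qed (rule trunc_ring_mult_assoc, erule trunc_ring_one_mult[OF assms], rule trunc_ring_mult_comm)

lemma trunc_ring_mult_constant_coeff:
  assumes "0 < n"
  shows "(f \<otimes>\<^bsub>trunc_ring v n\<^esub> g) (\<lambda>_. 0) = f (\<lambda>_. 0) * (g (\<lambda>_. 0) :: 'a::field)"
proof -
  have "monomial_splits v n (\<lambda>_. 0) = {(\<lambda>_. 0, \<lambda>_. 0)}"
    using zero_in_trunc_monos[OF assms] by (auto simp: monomial_splits_def fun_eq_iff)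
  then show ?thesis
    using zero_in_trunc_monos[OF assms] by (simp add: trunc_ring_mult)
qed

lemma trunc_ring_Units_constant_coeff_nonzero:
  assumes "0 < n" "f \<in> Units (trunc_ring v n)"
  shows "f (\<lambda>_. 0) \<noteq> (0 :: 'a::field)"
proof -
  obtain g where "f \<otimes>\<^bsub>trunc_ring v n\<^esub> g = \<one>\<^bsub>trunc_ring v n\<^esub>"
    using assms(2) by (auto simp: Units_def trunc_ring_mult_comm)
  then have "f (\<lambda>_. 0) * g (\<lambda>_. 0) = 1"
    by (metis trunc_ring_mult_constant_coeff[OF assms(1)] trunc_ring_one)
  then show ?thesis
    by auto
qed

lemma trunc_ring_mult_var_minus_const:
  assumes "e \<in> trunc_monos v n"
  shows "(var_minus_const v n l a \<otimes>\<^bsub>trunc_ring v n\<^esub> g) e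
       = - a * g e + (if 1 \<le> e l then g (\<lambda>i. e i - (if i = l then 1 else 0)) else (0 :: 'a::field))"
proof -
  define x where "x = (\<lambda>i. if i = l then 1 else 0 :: nat)"
  have "x \<noteq> (\<lambda>_. 0)"
    by (auto simp: x_def fun_eq_iff)
  then have "(var_minus_const v n l a \<otimes>\<^bsub>trunc_ring v n\<^esub> g) e = (\<Sum>(e1, e2)\<in>monomial_splits v n e.
      (if e1 = (\<lambda>_. 0) then - a * g e2 else 0) + (if e1 = x then g e2 else 0))"
    using assms
    by (auto simp: trunc_ring_mult var_minus_const_def monomial_splits_def simp flip: x_def intro!: sum.cong)
  also have "\<dots> = (\<Sum>(e1, e2)\<in>monomial_splits v n e. if e1 = (\<lambda>_. 0) then - a * g e2 else 0)
      + (\<Sum>(e1, e2)\<in>monomial_splits v n e. if e1 = x then g e2 else 0)"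
    by (simp add: split_def sum.distrib)
  also have "\<dots> = - a * g e + (if 1 \<le> e l then g (\<lambda>i. e i - x i) else 0)"
    using assms by (simp add: sum_monomial_splits_fst_eq) (auto simp: x_def)
  finally show ?thesis
    by (simp add: x_def)
qed

lemma var_minus_const_in_Units:
  assumes "0 < n" "(a :: 'a::field) \<noteq> 0"
  shows "var_minus_const v n l a \<in> Units (trunc_ring v n)"
proof -
  let ?R = "trunc_ring v n :: ((nat \<Rightarrow> nat) \<Rightarrow> 'a) ring"
  let ?u = "var_minus_const v n l a"
  \<comment> \<open>\<open>w\<close> is the geometric series \<open>-(1/a) \<Sum>\<^sub>k (x\<^sub>l/a)\<^sup>k\<close>, finite because \<open>x\<^sub>l\<close> is nilpotent in \<open>R\<close>\<close>
  define w where "w e = (if e \<in> trunc_monos v n \<and> (\<forall>i. i \<noteq> l \<longrightarrow> e i = 0)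
    then - (inverse a ^ Suc (e l)) else 0)" for e
  have zero: "(\<lambda>_. 0) \<in> trunc_monos v n"
    using assms(1) by (rule zero_in_trunc_monos)
  have "(?u \<otimes>\<^bsub>?R\<^esub> w) e = \<one>\<^bsub>?R\<^esub> e" for e
  proof (cases "e \<in> trunc_monos v n")
    case True
    consider "e = (\<lambda>_. 0)" | k where "\<forall>i. i \<noteq> l \<longrightarrow> e i = 0" "e l = Suc k" | i where "i \<noteq> l" "e i \<noteq> 0"
      by (metis not0_implies_Suc)
    then show ?thesis
    proof cases
      case 1
      then show ?thesis
        using assms(2) zero by (simp add: trunc_ring_mult_var_minus_const w_def trunc_ring_one)
    next
      case (2 k)
      have "(\<lambda>i. e i - (if i = l then 1 else 0)) \<in> trunc_monos v n"
        using True by (rule trunc_monos_downward_closed) simp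
      moreover have "e \<noteq> (\<lambda>_. 0)"
        using 2 by auto
      ultimately show ?thesis
        using True 2 assms(2) by (simp add: trunc_ring_mult_var_minus_const w_def trunc_ring_one)
    next
      case (3 i)
      then show ?thesis
        using True by (auto simp: trunc_ring_mult_var_minus_const w_def trunc_ring_one)
    qed
  next
    case False
    then show ?thesis
      using zero by (auto simp: trunc_ring_mult trunc_ring_one)
  qed
  then have "?u \<otimes>\<^bsub>?R\<^esub> w = \<one>\<^bsub>?R\<^esub>" "w \<otimes>\<^bsub>?R\<^esub> ?u = \<one>\<^bsub>?R\<^esub>"
    by (simp_all add: fun_eq_iff trunc_ring_mult_comm[where f = w])
  moreover have "?u \<in> carrier ?R" "w \<in> carrier ?R"
    by (simp_all add: trunc_ring_carrier var_minus_const_def w_def)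
  ultimately show ?thesis
    unfolding Units_def by blast
qed

section \<open>The character sum over the elements \<open>x\<^sub>l - a\<close>\<close>

lemma var_minus_const_separated_by_characters:
  assumes "0 < n" "a \<noteq> 0" "b \<noteq> 0" "a \<noteq> b"
  shows "\<exists>\<psi>\<in>characters (units_of (trunc_ring v n)).
           \<psi> (var_minus_const v n l a) \<noteq> \<psi> (var_minus_const v n l (b :: 'a::{finite,field}))"
proof -
  let ?R = "trunc_ring v n :: ((nat \<Rightarrow> nat) \<Rightarrow> 'a) ring"
  interpret R: comm_monoid ?R
    using assms(1) by (rule comm_monoid_trunc_ring)
  obtain \<phi> :: "'a \<Rightarrow> complex" where
    \<phi>_norm: "\<And>x. x \<noteq> 0 \<Longrightarrow> cmod (\<phi> x) = 1" and
    \<phi>_mult: "\<And>x y. x \<noteq> 0 \<Longrightarrow> y \<noteq> 0 \<Longrightarrow> \<phi> (x * y) = \<phi> x * \<phi> y" and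
    \<phi>_inj: "inj_on \<phi> (- {0})"
    by (metis finite_field_faithful_character)
  define \<psi> where "\<psi> = (\<lambda>f\<in>Units ?R. \<phi> (f (\<lambda>_. 0)))"
  have "\<psi> \<in> characters (units_of ?R)"
    by (rule charactersI)
       (auto simp: \<psi>_def units_of_carrier units_of_mult \<phi>_norm \<phi>_mult R.Units_m_closed
          trunc_ring_Units_constant_coeff_nonzero[OF assms(1)] trunc_ring_mult_constant_coeff[OF assms(1)])
  moreover have "\<psi> (var_minus_const v n l c) = \<phi> (- c)" if "c \<noteq> 0" for c
    using var_minus_const_in_Units[OF assms(1) that] zero_in_trunc_monos[OF assms(1)]
    by (simp add: \<psi>_def var_minus_const_def fun_eq_iff)
  moreover have "\<phi> (- a) \<noteq> \<phi> (- b)"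
    using inj_onD[OF \<phi>_inj] assms(2-4) by force
  ultimately show ?thesis
    using assms(2,3) by metis
qed

lemma unit_characters_eq: "unit_characters v n = characters (units_of (trunc_ring v n))"
  by (simp add: unit_characters_def characters_def units_of_carrier)

lemma finite_field_CHAR_bounds: "2 \<le> CHAR('a::{finite,field})" "CHAR('a) \<le> CARD('a)"
proof -
  have "0 < CHAR('a)"
    by (rule finite_imp_CHAR_pos) simp
  then show "2 \<le> CHAR('a)"
    using CHAR_not_1[where 'a='a] by linarith
  show "CHAR('a) \<le> CARD('a)"
    using CHAR_dvd_CARD[where 'a='a] by (simp add: dvd_imp_le)
qed

lemma sqrt_le_divide_sqrt:
  fixes p q :: real
  assumes "1 \<le> p" "p \<le> q"
  shows "sqrt q \<le> q / sqrt p"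
proof -
  have "sqrt q * sqrt p \<le> sqrt q * sqrt q"
    using assms by (intro mult_left_mono) auto
  then show ?thesis
    using assms by (simp add: pos_le_divide_eq)
qed

theorem lemma6p14:
  fixes v n l :: nat
  assumes "n \<ge> 1" and "v \<ge> 1" and "l < v"
  shows "(\<Sum>\<chi>\<in>(unit_characters v n :: (((nat \<Rightarrow> nat) \<Rightarrow> 'a::{finite,field}) \<Rightarrow> complex) set).
            cmod (\<Sum>a\<in>UNIV - {0::'a}. \<chi> (var_minus_const v n l a)))
           / real (card (unit_characters v n :: (((nat \<Rightarrow> nat) \<Rightarrow> 'a) \<Rightarrow> complex) set))
         \<le> real (CARD('a) - 1) / sqrt (real (CHAR('a) - 1))"
proof -
  have n: "0 < n"
    using assms(1) by simp
  interpret R: comm_monoid "trunc_ring v n :: ((nat \<Rightarrow> nat) \<Rightarrow> 'a) ring"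
    using n by (rule comm_monoid_trunc_ring)
  have "(\<Sum>\<chi>\<in>unit_characters v n. cmod (\<Sum>a\<in>UNIV - {0::'a}. \<chi> (var_minus_const v n l a)))
      / real (card (unit_characters v n :: (((nat \<Rightarrow> nat) \<Rightarrow> 'a) \<Rightarrow> complex) set))
      \<le> sqrt (real (card (UNIV - {0::'a})))"
    unfolding unit_characters_eq
    by (rule mean_norm_character_sum_le)
       (auto simp: R.units_group group.is_monoid units_of_carrier image_subset_iff
          var_minus_const_in_Units[OF n] var_minus_const_separated_by_characters[OF n])
  also have "\<dots> = sqrt (real (CARD('a) - 1))"
    by (simp add: card_Diff_singleton)
  also have "\<dots> \<le> real (CARD('a) - 1) / sqrt (real (CHAR('a) - 1))"
    using finite_field_CHAR_bounds[where 'a='a] by (intro sqrt_le_divide_sqrt) simp_all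
  finally show ?thesis .
qed

end
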